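(* Let $n$ be a positive integer and $m_0, m_1, \dots, m_{n-1}$ positive integers. Let $x_0, x_1, \dots, x_n$ be positive odd integers with $x_k = (2^{m_{k-1}}x_{k-1}-1)/3$ for $1 \le k \le n$, and put $b_k = \sum_{h=0}^{k-1} m_h$ (so $b_0 = 0$). For a positive odd integer $y_0$, define $y_k = (2^{m_{k-1}}y_{k-1}-1)/3$ for $1 \le k \le n$. Then $y_1, \dots, y_n$ are all (odd) integers if and only if $y_0 \equiv x_0 \pmod{2\cdot 3^n}$; in that case $y_k \equiv x_k \pmod{2^{b_k+1}3^{n-k}}$ for every $0 \le k \le n$. In particular there are infinitely many such sequences $y_0, y_1, \dots, y_n$ generated with the same numbers $m_0, \dots, m_{n-1}$. *)

theory Defs
  imports Complex_Main "HOL-Number_Theory.Cong"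
begin

primrec inv_seq :: "(nat \<Rightarrow> nat) \<Rightarrow> int \<Rightarrow> nat \<Rightarrow> real" where
  "inv_seq m y0 0 = of_int y0"
| "inv_seq m y0 (Suc k) = (2 ^ (m k) * inv_seq m y0 k - 1) / 3"

end

theory Submission
  imports Defs "HOL-Library.Infinite_Set"
begin

text \<open>
  Each step y \<mapsto> (2^m y - 1)/3 is affine with slope 2^m/3, so two orbits built with the same
  exponents differ at step k by 2^(b_k) (y_0 - x_0)/3^k. Since x_k is an integer and 2 is prime
  to 3, the k-th term of the y-orbit is an integer exactly when 3^k divides y_0 - x_0; oddness of
  y_0 and x_0 supplies the factor 2. Writing y_0 - x_0 = 2 \<cdot> 3^n t then gives
  y_k = x_k + 2^(b_k + 1) 3^(n - k) t, and the admissible y_0 form a residue class.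
\<close>

lemma inv_seq_diff:
  "inv_seq m w k - inv_seq m v k = 2 ^ (\<Sum>h<k. m h) * of_int (w - v) / 3 ^ k"
proof (induction k)
  case 0
  then show ?case by simp
next
  case (Suc k)
  have "inv_seq m w (Suc k) - inv_seq m v (Suc k) = 2 ^ m k * (inv_seq m w k - inv_seq m v k) / 3"
    by (simp add: field_simps)
  also have "\<dots> = 2 ^ (\<Sum>h<Suc k. m h) * of_int (w - v) / 3 ^ Suc k"
    by (simp add: Suc.IH power_add mult_ac)
  finally show ?case .
qed

lemma inv_seq_orbit:
  fixes x :: "nat \<Rightarrow> int"
  assumes rec: "\<forall>k\<in>{1..n}. 3 * x k = 2 ^ (m (k - 1)) * x (k - 1) - 1" and "k \<le> n"
  shows "inv_seq m (x 0) k = of_int (x k)"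
  using \<open>k \<le> n\<close>
proof (induction k)
  case 0
  then show ?case by simp
next
  case (Suc k)
  have "3 * x (Suc k) = 2 ^ m k * x k - 1"
    using rec Suc.prems by force
  then have "of_int (3 * x (Suc k)) = (of_int (2 ^ m k * x k - 1) :: real)"
    by (rule arg_cong)
  then have "3 * of_int (x (Suc k)) = 2 ^ m k * of_int (x k) - (1::real)"
    by simp
  moreover have "inv_seq m (x 0) k = of_int (x k)"
    using Suc by simp
  ultimately show ?case
    by simp
qed
lemma inv_seq_closed_form:
  fixes x :: "nat \<Rightarrow> int"
  assumes "\<forall>k\<in>{1..n}. 3 * x k = 2 ^ (m (k - 1)) * x (k - 1) - 1" and "k \<le> n"
  shows "inv_seq m w k = of_int (x k) + 2 ^ (\<Sum>h<k. m h) * of_int (w - x 0) / 3 ^ k"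
  using inv_seq_diff[of m w k "x 0"] inv_seq_orbit[OF assms] by (simp add: algebra_simps)

lemma three_pow_dvd_of_inv_seq_diff_Ints:
  assumes "inv_seq m w k - inv_seq m v k \<in> \<int>"
  shows "(3::int) ^ k dvd w - v"
proof -
  obtain z where "inv_seq m w k - inv_seq m v k = of_int z"
    using assms Ints_cases by metis
  then have "of_int (3 ^ k * z) = (of_int (2 ^ (\<Sum>h<k. m h) * (w - v)) :: real)"
    by (simp add: inv_seq_diff field_simps)
  then have "(3::int) ^ k dvd 2 ^ (\<Sum>h<k. m h) * (w - v)"
    unfolding of_int_eq_iff by (metis dvd_triv_left)
  moreover have "coprime ((3::int) ^ k) (2 ^ (\<Sum>h<k. m h))"
    by simp
  ultimately show ?thesis
    using coprime_dvd_mult_right_iff by blast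
qed

lemma cong_of_inv_seq_Ints:
  fixes x :: "nat \<Rightarrow> int"
  assumes "\<forall>k\<in>{1..n}. 3 * x k = 2 ^ (m (k - 1)) * x (k - 1) - 1"
    and "odd w" and "odd (x 0)" and "inv_seq m w n \<in> \<int>"
  shows "[w = x 0] (mod (2 * 3 ^ n))"
proof -
  have "inv_seq m w n - inv_seq m (x 0) n \<in> \<int>"
    using assms(4) inv_seq_orbit[OF assms(1) order_refl] by simp
  then have "(3::int) ^ n dvd w - x 0"
    by (rule three_pow_dvd_of_inv_seq_diff_Ints)
  moreover have "(2::int) dvd w - x 0"
    using assms(2,3) by simp
  ultimately have "2 * 3 ^ n dvd w - x 0"
    by (simp add: divides_mult)
  then show ?thesis
    by (simp add: cong_iff_dvd_diff)
qed

lemma inv_seq_odd_cong: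
  fixes x :: "nat \<Rightarrow> int"
  assumes "\<forall>k\<in>{1..n}. 3 * x k = 2 ^ (m (k - 1)) * x (k - 1) - 1"
    and "odd (x k)" and "[w = x 0] (mod (2 * 3 ^ n))" and "k \<le> n"
  shows "\<exists>z::int. inv_seq m w k = of_int z \<and> odd z \<and>
           [z = x k] (mod (2 ^ ((\<Sum>h<k. m h) + 1) * 3 ^ (n - k)))"
proof -
  obtain t where t: "w - x 0 = 2 * 3 ^ n * t"
    using assms(3) by (auto simp: cong_iff_dvd_diff)
  define z where "z = x k + 2 ^ ((\<Sum>h<k. m h) + 1) * 3 ^ (n - k) * t"
  have "(3::real) ^ n = 3 ^ k * 3 ^ (n - k)"
    using \<open>k \<le> n\<close> by (simp flip: power_add)
  then have "inv_seq m w k = of_int z"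
    unfolding inv_seq_closed_form[OF assms(1,4)] z_def t by (simp add: field_simps)
  moreover have "odd z" and "[z = x k] (mod (2 ^ ((\<Sum>h<k. m h) + 1) * 3 ^ (n - k)))"
    using assms(2) by (auto simp: z_def cong_iff_dvd_diff)
  ultimately show ?thesis by blast
qed

lemma odd_if_cong_odd:
  fixes w a d :: int
  assumes "[w = a] (mod (2 * d))" and "odd a"
  shows "odd w"
proof -
  have "[w = a] (mod 2)"
    using cong_dvd_modulus[OF assms(1)] by simp
  then show ?thesis
    using assms(2) by (simp add: cong_def odd_iff_mod_2_eq_one)
qed

lemma infinite_pos_residue_class:
  fixes a d :: int
  assumes "d > 0"
  shows "infinite {w. w > 0 \<and> [w = a] (mod d)}"
proof -
  define f where "f t = a + d * (\<bar>a\<bar> + 1 + int t)" for t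
  have "inj f"
    using assms by (auto intro: injI simp: f_def)
  moreover have "range f \<subseteq> {w. w > 0 \<and> [w = a] (mod d)}"
  proof -
    have "f t > 0" for t
    proof -
      have "\<bar>a\<bar> + 1 + int t \<le> d * (\<bar>a\<bar> + 1 + int t)"
        using mult_right_mono[of 1 d "\<bar>a\<bar> + 1 + int t"] assms by simp
      then show ?thesis by (simp add: f_def)
    qed
    moreover have "[f t = a] (mod d)" for t
      by (simp add: f_def cong_iff_dvd_diff)
    ultimately show ?thesis by auto
  qed
  ultimately show ?thesis
    using range_inj_infinite infinite_super by blast
qed

theorem lemma10:
  fixes n :: nat and m :: "nat \<Rightarrow> nat" and x :: "nat \<Rightarrow> int" and y0 :: int
  assumes "n > 0"
    and "\<forall>k<n. m k > 0"
    and "\<forall>k\<le>n. x k > 0 \<and> odd (x k)"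
    and "\<forall>k\<in>{1..n}. 3 * x k = 2 ^ (m (k - 1)) * x (k - 1) - 1"
    and "y0 > 0" and "odd y0"
  shows "((\<forall>k\<in>{1..n}. inv_seq m y0 k \<in> \<int>) \<longleftrightarrow> [y0 = x 0] (mod (2 * 3 ^ n)))
    \<and> ([y0 = x 0] (mod (2 * 3 ^ n)) \<longrightarrow>
         (\<forall>k\<le>n. \<exists>z::int. inv_seq m y0 k = of_int z \<and> odd z \<and>
             [z = x k] (mod (2 ^ ((\<Sum>h<k. m h) + 1) * 3 ^ (n - k)))))
    \<and> infinite {w::int. w > 0 \<and> odd w \<and> (\<forall>k\<in>{1..n}. inv_seq m w k \<in> \<int>)}"
proof -
  note rec = assms(4)
  have odd_x: "odd (x k)" if "k \<le> n" for k
    using assms(3) that by blast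
  have Ints_of_cong: "\<forall>k\<in>{1..n}. inv_seq m w k \<in> \<int>" if "[w = x 0] (mod (2 * 3 ^ n))" for w
    using inv_seq_odd_cong[OF rec odd_x that] by fastforce
  have "{w. w > 0 \<and> [w = x 0] (mod (2 * 3 ^ n))}
      \<subseteq> {w. w > 0 \<and> odd w \<and> (\<forall>k\<in>{1..n}. inv_seq m w k \<in> \<int>)}"
    using Ints_of_cong odd_if_cong_odd[OF _ odd_x[OF le0]] by blast
  then have "infinite {w. w > 0 \<and> odd w \<and> (\<forall>k\<in>{1..n}. inv_seq m w k \<in> \<int>)}"
    by (rule infinite_super) (simp add: infinite_pos_residue_class)
  moreover have "(\<forall>k\<in>{1..n}. inv_seq m y0 k \<in> \<int>) \<longleftrightarrow> [y0 = x 0] (mod (2 * 3 ^ n))"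
  proof
    assume "\<forall>k\<in>{1..n}. inv_seq m y0 k \<in> \<int>"
    then have "inv_seq m y0 n \<in> \<int>"
      using \<open>n > 0\<close> by simp
    then show "[y0 = x 0] (mod (2 * 3 ^ n))"
      by (rule cong_of_inv_seq_Ints[OF rec \<open>odd y0\<close> odd_x[OF le0]])
  qed (rule Ints_of_cong)
  moreover have "[y0 = x 0] (mod (2 * 3 ^ n)) \<longrightarrow>
      (\<forall>k\<le>n. \<exists>z::int. inv_seq m y0 k = of_int z \<and> odd z \<and>
         [z = x k] (mod (2 ^ ((\<Sum>h<k. m h) + 1) * 3 ^ (n - k))))"
    using inv_seq_odd_cong[OF rec odd_x] by blast
  ultimately show ?thesis
    by blast
qed

end
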